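(* Fix an integer $k\geq 1$. For $m\geq 1$, let $X_0(k,m)$ be the set of permutations $p=p_1p_2\cdots p_m\in S_m$ that avoid the pattern $231$ and satisfy $p_1=m$ and $p_k=1$. Then, as formal power series, \[\sum_{m\geq 1}\vert X_0(k,m)\vert x^m=x^kC(x)^{k-1},\] where $C(x)=\dfrac{1-\sqrt{1-4x}}{2x}=\sum_{m\geq 0}C_mx^m$ is the generating function of the Catalan numbers $C_m=\frac{1}{m+1}\binom{2m}{m}$.
   Context: A permutation $\pi=\pi_1\cdots\pi_n$ contains a pattern $\tau=\tau_1\cdots\tau_k\in S_k$ if there are indices $i_1<\cdots<i_k$ with $\pi_{i_j}<\pi_{i_\ell}$ iff $\tau_j<\tau_\ell$ for all $j,\ell$; otherwise $\pi$ avoids $\tau$. *)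

theory Defs
  imports "HOL-Computational_Algebra.Formal_Power_Series"
begin

text \<open>Permutations of [m] in one-line notation: lists p with p!(i-1) = p_i.\<close>
definition perms :: "nat \<Rightarrow> nat list set" where
  "perms m = {p. distinct p \<and> set p = {1..m}}"

definition contains :: "nat list \<Rightarrow> nat list \<Rightarrow> bool" where
  "contains p tau \<longleftrightarrow> (\<exists>is. length is = length tau \<and> sorted_wrt (<) is \<and>
      (\<forall>j<length is. is ! j < length p) \<and>
      (\<forall>j<length tau. \<forall>l<length tau. (p ! (is ! j) < p ! (is ! l) \<longleftrightarrow> tau ! j < tau ! l)))"

definition avoids :: "nat list \<Rightarrow> nat list \<Rightarrow> bool" where
  "avoids p tau \<longleftrightarrow> \<not> contains p tau"

definition X0 :: "nat \<Rightarrow> nat \<Rightarrow> nat list set" where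
  "X0 k m = {p \<in> perms m. avoids p [2,3,1] \<and> k \<le> m \<and> p ! 0 = m \<and> p ! (k - 1) = 1}"

definition catalan :: "nat \<Rightarrow> nat" where
  "catalan n = (2 * n choose n) div (n + 1)"

definition catalan_fps :: "int fps" where
  "catalan_fps = Abs_fps (\<lambda>n. int (catalan n))"

end

theory Submission
  imports Defs
begin

(* A 231-avoiding word whose first letter is g lists all letters below g before all letters
   above g, since g, a larger letter and then a smaller one would form a 231. So a 231-avoiding
   arrangement of an interval is its first entry g followed by a 231-avoiding arrangement of the
   values below g and one of the values above g, and the numbers of such arrangements satisfy the
   Catalan recurrence. For p in X_0(k,m) with k >= 2, let g be the entry after the leading m:
   then p = m x y, where x starts with g, lies in X_0(k-1,g) (it contains the entry 1, which is
   at most g), and y is any 231-avoiding arrangement of g+1, ..., m-1. Thus the generating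
   function of X_0(k,-) is x C(x) times that of X_0(k-1,-), and X_0(1,-) = {1}. *)

unbundle fps_syntax

section \<open>Catalan numbers\<close>

(* The Catalan recurrence for the closed form catalan n is obtained through the generating
   function G of the recurrence: H = 1 - 2xG satisfies H^2 = 1 - 4x, hence (1 - 4x) H' = -2H,
   which is the first-order recurrence of the central binomial coefficients. *)
fun segner :: "nat \<Rightarrow> int" where
  "segner 0 = 1"
| "segner (Suc n) = (\<Sum>j\<le>n. segner j * segner (n - j))"

lemma segner_fps_eq: "Abs_fps segner = 1 + fps_X * (Abs_fps segner)^2"
proof (rule fps_ext)
  fix n
  show "Abs_fps segner $ n = (1 + fps_X * (Abs_fps segner)^2) $ n"
  proof (cases n)
    case (Suc m)
    have "(1 + fps_X * (Abs_fps segner)^2) $ Suc m = (Abs_fps segner * Abs_fps segner) $ m"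
      by (simp add: power2_eq_square)
    thus ?thesis
      using Suc by (simp add: fps_mult_nth atLeast0AtMost)
  qed simp
qed

lemma fps_deriv_sqrt_1_minus_4X:
  fixes H :: "'a::{idom,ring_char_0} fps"
  assumes H: "H^2 = 1 - 4 * fps_X"
  shows "(1 - 4 * fps_X) * fps_deriv H = - 2 * H"
proof -
  have deriv: "2 * H * fps_deriv H = - 4"
    using arg_cong[OF H, of fps_deriv] by (simp add: power2_eq_square algebra_simps)
  have "2 * ((1 - 4 * fps_X) * fps_deriv H) = H * (2 * H * fps_deriv H)"
    unfolding H[symmetric] by (simp add: power2_eq_square algebra_simps)
  also have "\<dots> = 2 * (- 2 * H)"
    by (simp add: deriv)
  finally have "2 * ((1 - 4 * fps_X) * fps_deriv H) = 2 * (- 2 * H)" .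
  moreover have "(2 :: 'a fps) \<noteq> 0"
    by (simp add: numeral_fps_const)
  ultimately show ?thesis
    by (metis mult_left_cancel)
qed

lemma segner_Suc_recurrence: "int (n + 2) * segner (n + 1) = int (4 * n + 2) * segner n"
proof -
  define G where "G = Abs_fps segner"
  define H where "H = 1 - 2 * fps_X * G"
  have "H^2 = 1 - 4 * fps_X * (G - fps_X * G^2)"
    by (simp add: H_def power2_eq_square algebra_simps)
  also have "G - fps_X * G^2 = 1"
    using segner_fps_eq[folded G_def] by (simp add: algebra_simps)
  finally have "(1 - 4 * fps_X) * fps_deriv H = - 2 * H"
    by (intro fps_deriv_sqrt_1_minus_4X) simp
  hence "((1 - 4 * fps_X) * fps_deriv H) $ Suc n = (- 2 * H) $ Suc n"
    by simp
  moreover have "H $ Suc j = - 2 * segner j" for j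
    by (simp add: H_def G_def mult.assoc numeral_fps_const)
  ultimately show ?thesis
    by (simp add: algebra_simps numeral_fps_const)
qed

lemma central_binomial_Suc:
  "(n + 1) * (2 * (n + 1) choose (n + 1)) = (4 * n + 2) * (2 * n choose n)"
proof -
  have upper: "(n + 1) * (2 * (n + 1) choose (n + 1)) = (2 * n + 2) * (2 * n + 1 choose n)"
    using Suc_times_binomial[of n "2 * n + 1"] by simp
  have lower: "(n + 1) * (2 * n + 1 choose n) = (2 * n + 1) * (2 * n choose n)"
    using Suc_times_binomial_eq[of "2 * n" n] binomial_symmetric[of n "2 * n + 1"] by simp
  have "(n + 1) * ((n + 1) * (2 * (n + 1) choose (n + 1))) = (2 * n + 2) * ((n + 1) * (2 * n + 1 choose n))"
    unfolding upper by (simp only: mult.left_commute)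
  also have "\<dots> = (n + 1) * ((4 * n + 2) * (2 * n choose n))"
    unfolding lower by (simp add: algebra_simps)
  finally show ?thesis
    by (rule mult_left_cancel[THEN iffD1, rotated]) simp
qed

lemma segner_eq_central_binomial: "int (n + 1) * segner n = int (2 * n choose n)"
proof (induction n)
  case (Suc n)
  have "int (n + 1) * (int (n + 2) * segner (n + 1)) = int (4 * n + 2) * (int (n + 1) * segner n)"
    unfolding segner_Suc_recurrence by (simp only: mult.left_commute)
  also have "\<dots> = int (n + 1) * int (2 * (n + 1) choose (n + 1))"
    unfolding Suc.IH by (simp only: of_nat_mult[symmetric] central_binomial_Suc)
  finally show ?case
    by simp
qed simp

lemma segner_eq_catalan: "segner n = int (catalan n)"
proof -
  have "0 \<le> int (n + 1) * segner n"
    unfolding segner_eq_central_binomial by simp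
  hence "0 \<le> segner n"
    by (simp add: zero_le_mult_iff)
  then obtain t where t: "segner n = int t"
    using nonneg_int_cases by blast
  have "int ((n + 1) * t) = int (2 * n choose n)"
    unfolding of_nat_mult t[symmetric] by (rule segner_eq_central_binomial)
  hence "(n + 1) * t = 2 * n choose n"
    by (simp only: of_nat_eq_iff)
  thus ?thesis
    by (metis t catalan_def nonzero_mult_div_cancel_left add_eq_0_iff_both_eq_0 one_neq_zero)
qed

lemma catalan_0: "catalan 0 = 1"
  by (simp add: catalan_def)

lemma catalan_Suc: "catalan (Suc n) = (\<Sum>j\<le>n. catalan j * catalan (n - j))"
proof -
  have "int (catalan (Suc n)) = int (\<Sum>j\<le>n. catalan j * catalan (n - j))"
    by (simp flip: segner_eq_catalan)
  thus ?thesis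
    by (simp only: of_nat_eq_iff)
qed

section \<open>The pattern 231\<close>

definition contains_231 :: "'a::linorder list \<Rightarrow> bool" where
  "contains_231 p \<longleftrightarrow> (\<exists>i j l. i < j \<and> j < l \<and> l < length p \<and> p ! l < p ! i \<and> p ! i < p ! j)"

lemma contains_iff_contains_231: "contains p [2, 3, 1] \<longleftrightarrow> contains_231 p"
proof
  assume "contains p [2, 3, 1]"
  then obtain "is" where "length is = 3" and sorted: "sorted_wrt (<) is"
    and bound: "\<forall>j<3. is ! j < length p"
    and order: "\<forall>j<3. \<forall>l<3. p ! (is ! j) < p ! (is ! l) \<longleftrightarrow> [2, 3, 1::nat] ! j < [2, 3, 1] ! l"
    unfolding contains_def by (auto simp: numeral_3_eq_3)
  then obtain i j l where "is = [i, j, l]"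
    by (auto simp: numeral_3_eq_3 length_Suc_conv)
  with sorted bound[rule_format, of 2] order[rule_format, of 0 1] order[rule_format, of 2 0] show "contains_231 p"
    unfolding contains_231_def by (intro exI[of _ i] exI[of _ j] exI[of _ l]) auto
next
  assume "contains_231 p"
  then obtain i j l where "i < j" "j < l" "l < length p" "p ! l < p ! i" "p ! i < p ! j"
    unfolding contains_231_def by blast
  then show "contains p [2, 3, 1]"
    unfolding contains_def by (intro exI[of _ "[i, j, l]"]) (auto simp: less_Suc_eq numeral_3_eq_3)
qed

lemma contains_231I:
  assumes "b < c" "a < b"
  shows "contains_231 (xs @ b # ys @ c # zs @ a # ws)"
  unfolding contains_231_def
  by (rule exI[of _ "length xs"], rule exI[of _ "length xs + Suc (length ys)"],
      rule exI[of _ "length xs + Suc (length ys) + Suc (length zs)"]) (simp add: assms nth_append)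

lemma contains_231_append_left: "contains_231 xs \<Longrightarrow> contains_231 (xs @ ys)"
  unfolding contains_231_def
proof (elim exE conjE)
  fix i j l assume "i < j" "j < l" "l < length xs" "xs ! l < xs ! i" "xs ! i < xs ! j"
  then show "\<exists>i j l. i < j \<and> j < l \<and> l < length (xs @ ys) \<and> (xs @ ys) ! l < (xs @ ys) ! i
      \<and> (xs @ ys) ! i < (xs @ ys) ! j"
    by (intro exI[of _ i] exI[of _ j] exI[of _ l]) (simp add: nth_append)
qed

lemma contains_231_append_right: "contains_231 ys \<Longrightarrow> contains_231 (xs @ ys)"
  unfolding contains_231_def
proof (elim exE conjE)
  fix i j l assume "i < j" "j < l" "l < length ys" "ys ! l < ys ! i" "ys ! i < ys ! j"
  then show "\<exists>i j l. i < j \<and> j < l \<and> l < length (xs @ ys) \<and> (xs @ ys) ! l < (xs @ ys) ! i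
      \<and> (xs @ ys) ! i < (xs @ ys) ! j"
    by (intro exI[of _ "length xs + i"] exI[of _ "length xs + j"] exI[of _ "length xs + l"])
      (simp add: nth_append)
qed

lemma contains_231_append_iff:
  assumes "\<forall>u\<in>set xs. \<forall>v\<in>set ys. u < v"
  shows "contains_231 (xs @ ys) \<longleftrightarrow> contains_231 xs \<or> contains_231 ys"
proof
  assume "contains_231 (xs @ ys)"
  then obtain i j l where ijl: "i < j" "j < l" "l < length xs + length ys"
    and less: "(xs @ ys) ! l < (xs @ ys) ! i" "(xs @ ys) ! i < (xs @ ys) ! j"
    unfolding contains_231_def by auto
  consider "l < length xs" | "length xs \<le> i" | "i < length xs" "length xs \<le> l"
    by linarith
  then show "contains_231 xs \<or> contains_231 ys"
  proof cases
    case 1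
    with ijl less show ?thesis
      unfolding contains_231_def by (intro disjI1 exI[of _ i] exI[of _ j] exI[of _ l]) (simp add: nth_append)
  next
    case 2
    with ijl less show ?thesis
      unfolding contains_231_def
      by (intro disjI2 exI[of _ "i - length xs"] exI[of _ "j - length xs"] exI[of _ "l - length xs"])
        (auto simp: nth_append)
  next
    case 3
    then have "(xs @ ys) ! i \<in> set xs" "(xs @ ys) ! l \<in> set ys"
      using ijl by (simp_all add: nth_append)
    with assms less show ?thesis
      by force
  qed
next
  assume "contains_231 xs \<or> contains_231 ys"
  then show "contains_231 (xs @ ys)"
    using contains_231_append_left contains_231_append_right by blast
qed

lemma contains_231_Cons_greater_iff:
  assumes "\<forall>v\<in>set ys. v < g"
  shows "contains_231 (g # ys) \<longleftrightarrow> contains_231 ys"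
proof
  assume "contains_231 (g # ys)"
  then obtain i j l where ijl: "i < j" "j < l" "l < Suc (length ys)"
    and less: "(g # ys) ! l < (g # ys) ! i" "(g # ys) ! i < (g # ys) ! j"
    unfolding contains_231_def by auto
  obtain j' l' where jl: "j = Suc j'" "l = Suc l'"
    using ijl by (cases j; cases l) auto
  show "contains_231 ys"
  proof (cases i)
    case 0
    have "ys ! j' \<in> set ys"
      using ijl jl by simp
    with assms less 0 jl show ?thesis
      by force
  next
    case (Suc i')
    with ijl less jl show ?thesis
      unfolding contains_231_def by (intro exI[of _ i'] exI[of _ j'] exI[of _ l']) simp
  qed
next
  assume "contains_231 ys"
  then show "contains_231 (g # ys)"
    using contains_231_append_right[of ys "[g]"] by simp
qed

lemma contains_231_Cons_append_iff:
  assumes "\<forall>u\<in>set xs. u < g" "\<forall>v\<in>set ys. g < v"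
  shows "contains_231 (g # xs @ ys) \<longleftrightarrow> contains_231 xs \<or> contains_231 ys"
proof -
  have "\<forall>u\<in>set (g # xs). \<forall>v\<in>set ys. u < v"
    using assms by force
  then show ?thesis
    using contains_231_append_iff[of "g # xs" ys] contains_231_Cons_greater_iff[OF assms(1)] by simp
qed

lemma not_contains_231_Cons_split:
  assumes "\<not> contains_231 (g # w)"
  obtains xs ys where "w = xs @ ys" "\<forall>u\<in>set xs. u \<le> g" "\<forall>v\<in>set ys. g \<le> v"
proof
  define xs where "xs = takeWhile (\<lambda>u. u \<le> g) w"
  define ys where "ys = dropWhile (\<lambda>u. u \<le> g) w"
  show "w = xs @ ys" "\<forall>u\<in>set xs. u \<le> g"
    by (auto simp: xs_def ys_def dest: set_takeWhileD)
  show "\<forall>v\<in>set ys. g \<le> v"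
  proof (rule ballI, rule ccontr)
    fix v assume v: "v \<in> set ys" "\<not> g \<le> v"
    then obtain c zs where ys: "ys = c # zs"
      by (cases ys) auto
    hence "g < c"
      using hd_dropWhile[of "\<lambda>u. u \<le> g" w] by (auto simp: ys_def)
    with v have "v \<in> set zs"
      by (auto simp: ys)
    then obtain zs1 ws where "zs = zs1 @ v # ws"
      by (meson split_list)
    with \<open>g < c\<close> v(2) \<open>w = xs @ ys\<close> ys have "contains_231 ([] @ g # xs @ c # zs1 @ v # ws)"
      by (intro contains_231I) auto
    with assms \<open>w = xs @ ys\<close> ys \<open>zs = zs1 @ v # ws\<close> show False
      by simp
  qed
qed

lemma card_UN_image_pairs:
  assumes "finite I" "\<And>j. j \<in> I \<Longrightarrow> finite (A j)" "\<And>j. j \<in> I \<Longrightarrow> finite (B j)"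
    and "inj_on (\<lambda>(j, x, y). f j x y) (SIGMA j:I. A j \<times> B j)"
  shows "card (\<Union>j\<in>I. (\<lambda>(x, y). f j x y) ` (A j \<times> B j)) = (\<Sum>j\<in>I. card (A j) * card (B j))"
proof -
  have "(\<Union>j\<in>I. (\<lambda>(x, y). f j x y) ` (A j \<times> B j)) = (\<lambda>(j, x, y). f j x y) ` (SIGMA j:I. A j \<times> B j)"
    by force
  also have "card \<dots> = card (SIGMA j:I. A j \<times> B j)"
    by (rule card_image[OF assms(4)])
  also have "\<dots> = (\<Sum>j\<in>I. card (A j) * card (B j))"
    using assms(1-3) by (simp add: card_cartesian_product)
  finally show ?thesis .
qed

section \<open>231-avoiding arrangements of an interval\<close>

definition Av231 :: "nat \<Rightarrow> nat \<Rightarrow> nat list set" where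
  "Av231 a n = {p. distinct p \<and> set p = {a..<a + n} \<and> \<not> contains_231 p}"

lemma length_Av231: "p \<in> Av231 a n \<Longrightarrow> length p = n"
  unfolding Av231_def by (metis (mono_tags) distinct_card card_atLeastLessThan mem_Collect_eq
      add_diff_cancel_left')

lemma finite_Av231: "finite (Av231 a n)"
proof (rule finite_subset)
  show "Av231 a n \<subseteq> {p. set p \<subseteq> {a..<a + n} \<and> length p = n}"
    using length_Av231 by (auto simp: Av231_def)
qed (rule finite_lists_length_eq, simp)

lemma Av231_0: "Av231 a 0 = {[]}"
  by (auto simp: Av231_def contains_231_def)

lemma set_Cons_append_eq_atLeastLessThanD:
  assumes set: "set (g # xs @ ys) = {a..<c}" and "\<forall>u\<in>set xs. u < g" "\<forall>v\<in>set ys. g < v"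
  shows "set xs = {a..<g}" "set ys = {Suc g..<c}"
proof -
  have mem: "u = g \<or> u \<in> set xs \<or> u \<in> set ys \<longleftrightarrow> a \<le> u \<and> u < c" for u
    unfolding atLeastLessThan_iff[symmetric] set[symmetric] by simp
  show "set xs = {a..<g}"
  proof (intro set_eqI iffI)
    fix u assume "u \<in> set xs"
    then show "u \<in> {a..<g}"
      using mem[of u] assms(2) by auto
  next
    fix u assume "u \<in> {a..<g}"
    then show "u \<in> set xs"
      using mem[of u] mem[of g] assms(3) by auto
  qed
  show "set ys = {Suc g..<c}"
  proof (intro set_eqI iffI)
    fix v assume "v \<in> set ys"
    then show "v \<in> {Suc g..<c}"
      using mem[of v] assms(3) by auto
  next
    fix v assume "v \<in> {Suc g..<c}"
    then show "v \<in> set ys"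
      using mem[of v] mem[of g] assms(2) by auto
  qed
qed

lemma Cons_in_Av231_iff:
  "g # w \<in> Av231 a n \<longleftrightarrow> a \<le> g \<and> g < a + n \<and>
     (\<exists>xs ys. w = xs @ ys \<and> xs \<in> Av231 a (g - a) \<and> ys \<in> Av231 (Suc g) (a + n - Suc g))"
proof
  assume "g # w \<in> Av231 a n"
  hence dist: "distinct (g # w)" and set: "set (g # w) = {a..<a + n}" and avoid: "\<not> contains_231 (g # w)"
    by (auto simp: Av231_def)
  then obtain xs ys where w: "w = xs @ ys" and xs: "\<forall>u\<in>set xs. u \<le> g" and ys: "\<forall>v\<in>set ys. g \<le> v"
    using not_contains_231_Cons_split by blast
  have "g \<notin> set xs" "g \<notin> set ys"
    using dist w by auto
  have xs_less: "\<forall>u\<in>set xs. u < g"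
    using xs \<open>g \<notin> set xs\<close> by (metis order.not_eq_order_implies_strict)
  have ys_greater: "\<forall>v\<in>set ys. g < v"
    using ys \<open>g \<notin> set ys\<close> by (metis order.not_eq_order_implies_strict)
  have set_xs: "set xs = {a..<g}" and set_ys: "set ys = {Suc g..<a + n}"
    using set_Cons_append_eq_atLeastLessThanD[OF set[unfolded w] xs_less ys_greater] by simp_all
  have "\<not> contains_231 xs" "\<not> contains_231 ys"
    using avoid xs_less ys_greater by (simp_all add: w contains_231_Cons_append_iff)
  moreover have "a \<le> g" "g < a + n"
    using set by auto
  ultimately show "a \<le> g \<and> g < a + n \<and>
     (\<exists>xs ys. w = xs @ ys \<and> xs \<in> Av231 a (g - a) \<and> ys \<in> Av231 (Suc g) (a + n - Suc g))"
    using dist set_xs set_ys unfolding w by (auto simp: Av231_def)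
next
  assume "a \<le> g \<and> g < a + n \<and>
     (\<exists>xs ys. w = xs @ ys \<and> xs \<in> Av231 a (g - a) \<and> ys \<in> Av231 (Suc g) (a + n - Suc g))"
  then obtain xs ys where bounds: "a \<le> g" "g < a + n" and w: "w = xs @ ys"
    and xs: "xs \<in> Av231 a (g - a)" and ys: "ys \<in> Av231 (Suc g) (a + n - Suc g)"
    by blast
  have set_xs: "set xs = {a..<g}" and set_ys: "set ys = {Suc g..<a + n}"
    using xs ys bounds by (auto simp: Av231_def)
  have "\<forall>u\<in>set xs. u < g" "\<forall>v\<in>set ys. g < v"
    using set_xs set_ys by auto
  with xs ys have "\<not> contains_231 (g # xs @ ys)"
    by (simp add: contains_231_Cons_append_iff Av231_def)
  moreover have "set (g # xs @ ys) = {a..<a + n}"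
    using set_xs set_ys bounds by auto
  moreover have "distinct (g # xs @ ys)"
    using xs ys set_xs set_ys by (auto simp: Av231_def)
  ultimately show "g # w \<in> Av231 a n"
    by (simp add: Av231_def w)
qed

lemma Cons_max_in_Av231_iff: "(a + n) # w \<in> Av231 a (Suc n) \<longleftrightarrow> w \<in> Av231 a n"
  by (simp add: Cons_in_Av231_iff Av231_0)

lemma Av231_Suc:
  "Av231 a (Suc n) = (\<Union>j\<le>n. (\<lambda>(xs, ys). (a + j) # xs @ ys) ` (Av231 a j \<times> Av231 (Suc (a + j)) (n - j)))"
proof (intro set_eqI iffI)
  fix p assume p: "p \<in> Av231 a (Suc n)"
  then obtain g w where "p = g # w"
    using length_Av231 by (cases p) fastforce+
  with p obtain xs ys where "p = g # xs @ ys" "a \<le> g" "g \<le> a + n"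
    and "xs \<in> Av231 a (g - a)" "ys \<in> Av231 (Suc g) (a + Suc n - Suc g)"
    by (auto simp: Cons_in_Av231_iff)
  moreover have "a + (g - a) = g" "a + Suc n - Suc g = n - (g - a)"
    using \<open>a \<le> g\<close> by auto
  ultimately show "p \<in> (\<Union>j\<le>n. (\<lambda>(xs, ys). (a + j) # xs @ ys) ` (Av231 a j \<times> Av231 (Suc (a + j)) (n - j)))"
    by (intro UN_I[of "g - a"]) auto
next
  fix p assume "p \<in> (\<Union>j\<le>n. (\<lambda>(xs, ys). (a + j) # xs @ ys) ` (Av231 a j \<times> Av231 (Suc (a + j)) (n - j)))"
  then obtain j xs ys where "j \<le> n" "p = (a + j) # xs @ ys" "xs \<in> Av231 a j" "ys \<in> Av231 (Suc (a + j)) (n - j)"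
    by auto
  then show "p \<in> Av231 a (Suc n)"
    by (auto simp: Cons_in_Av231_iff)
qed

lemma card_Av231: "card (Av231 a n) = catalan n"
proof (induction n arbitrary: a rule: less_induct)
  case (less n)
  show ?case
  proof (cases n)
    case 0
    then show ?thesis
      by (simp add: Av231_0 catalan_0)
  next
    case (Suc m)
    have "inj_on (\<lambda>(j, xs, ys). (a + j) # xs @ ys) (SIGMA j:{..m}. Av231 a j \<times> Av231 (Suc (a + j)) (m - j))"
      by (auto intro!: inj_onI simp: append_eq_append_conv[OF disjI1] length_Av231)
    then have "card (Av231 a n) = (\<Sum>j\<le>m. card (Av231 a j) * card (Av231 (Suc (a + j)) (m - j)))"
      unfolding Suc Av231_Suc by (intro card_UN_image_pairs) (auto simp: finite_Av231)
    also have "\<dots> = (\<Sum>j\<le>m. catalan j * catalan (m - j))"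
      using less Suc by (intro sum.cong) auto
    finally show ?thesis
      by (simp add: Suc catalan_Suc)
  qed
qed

lemma X0_iff: "p \<in> X0 k m \<longleftrightarrow> p \<in> Av231 1 m \<and> k \<le> m \<and> p ! 0 = m \<and> p ! (k - 1) = 1"
  unfolding X0_def perms_def avoids_def contains_iff_contains_231 Av231_def
  by (auto simp: atLeastLessThanSuc_atLeastAtMost)

lemma finite_X0: "finite (X0 k m)"
  by (rule finite_subset[OF _ finite_Av231[of 1 m]]) (auto simp: X0_iff)

lemma length_X0: "p \<in> X0 k m \<Longrightarrow> length p = m"
  unfolding X0_iff by (auto dest: length_Av231)

lemma X0_1: "X0 1 m = (if m = 1 then {[1]} else {})"
  by (auto simp: X0_iff Av231_Suc Av231_0)

lemma Cons_in_Av231_iff_block: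
  "g # w \<in> Av231 a n \<longleftrightarrow> a \<le> g \<and> g < a + n \<and>
     (\<exists>xs ys. w = xs @ ys \<and> g # xs \<in> Av231 a (Suc g - a) \<and> ys \<in> Av231 (Suc g) (a + n - Suc g))"
proof (cases "a \<le> g")
  case True
  then have "g # xs \<in> Av231 a (Suc g - a) \<longleftrightarrow> xs \<in> Av231 a (g - a)" for xs
    using Cons_max_in_Av231_iff[of a "g - a" xs] by (simp add: Suc_diff_le)
  then show ?thesis
    unfolding Cons_in_Av231_iff[of g w] by simp
qed (simp add: Cons_in_Av231_iff)

lemma X0_SucE:
  assumes "k \<ge> 1" and "p \<in> X0 (Suc k) m"
  obtains g xs ys where "g < m" "p = m # xs @ ys" "xs \<in> X0 k g" "ys \<in> Av231 (Suc g) (m - Suc g)"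
proof -
  from assms(2) have p: "p \<in> Av231 1 m" and "Suc k \<le> m" "p ! 0 = m" "p ! k = 1"
    by (simp_all add: X0_iff)
  then obtain m' where m: "m = Suc m'"
    by (cases m) auto
  obtain b where pb: "p = m # b"
    using \<open>p ! 0 = m\<close> length_Av231[OF p] m by (cases p) auto
  have "b \<in> Av231 1 m'"
    using p Cons_max_in_Av231_iff[of 1 m' b] unfolding pb m by simp
  moreover have "b \<noteq> []"
    using length_Av231[OF calculation] assms(1) \<open>Suc k \<le> m\<close> m by auto
  ultimately obtain g w where gw: "b = g # w" "g # w \<in> Av231 1 m'"
    by (metis neq_Nil_conv)
  then obtain xs' ys where w: "w = xs' @ ys" and "g < 1 + m'" and "g # xs' \<in> Av231 1 (Suc g - 1)"
    and "ys \<in> Av231 (Suc g) (1 + m' - Suc g)"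
    using Cons_in_Av231_iff_block[THEN iffD1, OF gw(2)] by blast
  then have "g < m" and xs: "g # xs' \<in> Av231 1 g" and ys: "ys \<in> Av231 (Suc g) (m - Suc g)"
    by (simp_all add: m)
  have one: "((g # xs') @ ys) ! (k - 1) = 1"
    using \<open>p ! k = 1\<close> assms(1) by (cases k) (simp_all add: pb gw w)
  have "k - 1 < length (g # xs')"
  proof (rule ccontr)
    assume "\<not> ?thesis"
    then have "((g # xs') @ ys) ! (k - 1) \<in> set ys"
      using length_Av231[OF ys] \<open>Suc k \<le> m\<close> \<open>g < m\<close> length_Av231[OF xs] by (auto simp: nth_append)
    with one xs ys show False
      by (auto simp: Av231_def)
  qed
  then have "(g # xs') ! (k - 1) = 1"
    using one by (simp only: nth_append_left)
  with xs length_Av231[OF xs] assms(1) \<open>k - 1 < length (g # xs')\<close> have "g # xs' \<in> X0 k g"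
    unfolding X0_iff by simp
  with \<open>g < m\<close> ys pb gw w show thesis
    using that[of g "g # xs'" ys] by simp
qed

lemma Cons_append_in_X0_Suc:
  assumes "k \<ge> 1" "g < m" "xs \<in> X0 k g" "ys \<in> Av231 (Suc g) (m - Suc g)"
  shows "m # xs @ ys \<in> X0 (Suc k) m"
proof -
  have "xs \<noteq> []"
    using assms length_X0[OF assms(3)] by (auto simp: X0_iff)
  with assms(3) obtain xs' where xs': "xs = g # xs'" "g # xs' \<in> Av231 1 g" "k \<le> g" "xs ! (k - 1) = 1"
    by (cases xs) (auto simp: X0_iff)
  have "g # xs' @ ys \<in> Av231 1 (m - 1)"
    using xs' assms by (intro Cons_in_Av231_iff_block[THEN iffD2]) auto
  then have "m # xs @ ys \<in> Av231 1 m"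
    using Cons_max_in_Av231_iff[of 1 "m - 1"] assms(2) xs' by simp
  moreover have "k - 1 < length xs"
    using xs' assms length_Av231[OF xs'(2)] by simp
  then have "(xs @ ys) ! (k - 1) = 1"
    using xs'(4) by (simp add: nth_append)
  ultimately show ?thesis
    using xs' assms by (cases k) (simp_all add: X0_iff)
qed

lemma X0_Suc:
  assumes "k \<ge> 1"
  shows "X0 (Suc k) m = (\<Union>g<m. (\<lambda>(xs, ys). m # xs @ ys) ` (X0 k g \<times> Av231 (Suc g) (m - Suc g)))"
proof (intro set_eqI iffI)
  fix p assume "p \<in> X0 (Suc k) m"
  then show "p \<in> (\<Union>g<m. (\<lambda>(xs, ys). m # xs @ ys) ` (X0 k g \<times> Av231 (Suc g) (m - Suc g)))"
    by (elim X0_SucE[OF assms]) auto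
qed (auto intro: Cons_append_in_X0_Suc[OF assms])

lemma card_X0_Suc:
  assumes "k \<ge> 1"
  shows "card (X0 (Suc k) m) = (\<Sum>g<m. card (X0 k g) * catalan (m - Suc g))"
proof -
  have head: "(xs @ ys) ! 0 = g" if "xs \<in> X0 k g" for xs ys g
    using that assms length_X0[OF that] by (auto simp: X0_iff nth_append)
  have "inj_on (\<lambda>(g, xs, ys). m # xs @ ys) (SIGMA g:{..<m}. X0 k g \<times> Av231 (Suc g) (m - Suc g))"
  proof (rule inj_onI, clarsimp)
    fix g xs ys g' xs' ys'
    assume "xs \<in> X0 k g" "xs' \<in> X0 k g'" and eq: "xs @ ys = xs' @ ys'"
    moreover from this have "g = g'"
      using head by metis
    ultimately show "g = g' \<and> xs = xs' \<and> ys = ys'"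
      using length_X0 by (simp add: append_eq_append_conv[OF disjI1])
  qed
  then have "card (X0 (Suc k) m) = (\<Sum>g<m. card (X0 k g) * card (Av231 (Suc g) (m - Suc g)))"
    unfolding X0_Suc[OF assms] by (intro card_UN_image_pairs) (auto simp: finite_X0 finite_Av231)
  then show ?thesis
    by (simp add: card_Av231)
qed

lemma X0_fps_Suc:
  assumes "k \<ge> 1"
  shows "Abs_fps (\<lambda>m. int (card (X0 (Suc k) m))) = fps_X * (Abs_fps (\<lambda>m. int (card (X0 k m))) * catalan_fps)"
    (is "?G = fps_X * (?F * catalan_fps)")
proof (rule fps_ext)
  fix m
  show "?G $ m = (fps_X * (?F * catalan_fps)) $ m"
  proof (cases m)
    case 0
    then show ?thesis
      using card_X0_Suc[OF assms, of 0] by simp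
  next
    case (Suc m')
    have "(fps_X * (?F * catalan_fps)) $ m = (?F * catalan_fps) $ m'"
      by (simp only: fps_X_mult_nth Suc) simp
    also have "\<dots> = (\<Sum>g\<le>m'. int (card (X0 k g)) * int (catalan (m' - g)))"
      by (simp add: fps_mult_nth atLeast0AtMost catalan_fps_def)
    also have "\<dots> = ?G $ m"
      using card_X0_Suc[OF assms, of m] by (simp add: Suc lessThan_Suc_atMost)
    finally show ?thesis ..
  qed
qed

lemma X0_fps:
  assumes "k \<ge> 1"
  shows "Abs_fps (\<lambda>m. int (card (X0 k m))) = fps_X ^ k * catalan_fps ^ (k - 1)"
  using assms
proof (induction k rule: nat_induct_at_least)
  case base
  show ?case
    by (rule fps_ext) (simp add: X0_1[unfolded One_nat_def] fps_X_nth)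
next
  case (Suc k)
  then obtain j where "k = Suc j"
    by (cases k) auto
  with Suc show ?case
    by (simp add: X0_fps_Suc algebra_simps)
qed

theorem lemma1:
  fixes k :: nat
  assumes "k \<ge> 1"
  shows "Abs_fps (\<lambda>m. if m \<ge> 1 then int (card (X0 k m)) else 0)
           = fps_X ^ k * catalan_fps ^ (k - 1)"
proof -
  have "X0 k 0 = {}"
    using assms by (auto simp: X0_iff)
  then have "(if m \<ge> 1 then int (card (X0 k m)) else 0) = int (card (X0 k m))" for m
    by (cases m) simp_all
  with X0_fps[OF assms] show ?thesis
    by simp
qed

end
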